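(* Let $d$ be a positive integer and let $\mu$ be a Borel probability measure on $\mathbb{S}^{d-1}$. Then $$\int_{\mathbb{S}^{d-1}}\int_{\mathbb{S}^{d-1}}\int_{\mathbb{S}^{d-1}}\left|\langle x,y\rangle\langle x,z\rangle\langle y,z\rangle\right|\,d\mu(x)\,d\mu(y)\,d\mu(z)\ge\frac{1}{d^2},$$ with equality if and only if $\mu$ is isotropic and $\langle x,y\rangle\langle x,z\rangle\langle y,z\rangle\ge 0$ for all points $x,y,z$ in the support of $\mu$.
   Context: A Borel probability measure $\mu$ on $\mathbb{S}^{d-1}$ is isotropic if $\int_{\mathbb{S}^{d-1}}xx^T\,d\mu(x)=\frac1d I_d$, equivalently $\int\langle x,y\rangle^2\,d\mu(x)=\frac1d$ for every $y\in\mathbb{S}^{d-1}$. *)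

theory Defs
  imports "HOL-Probability.Probability"
begin

definition measure_support :: "'a::topological_space measure \<Rightarrow> 'a set" where
  "measure_support M = {x. \<forall>U. open U \<and> x \<in> U \<longrightarrow> emeasure M U > 0}"

definition isotropic :: "'a::euclidean_space measure \<Rightarrow> bool" where
  "isotropic M \<longleftrightarrow>
     (\<forall>i\<in>Basis. \<forall>j\<in>Basis.
        (\<integral>x. (x \<bullet> i) * (x \<bullet> j) \<partial>M) = (if i = j then 1 / real DIM('a) else 0))"

end

theory Submission
  imports Defs
begin

(*
  Let A be the second moment matrix of \<mu>, so that second_moment u w = <u, A w>; since \<mu> lives
  on the unit sphere, tr A = 1, and isotropy means A = I/d. Integrating out x and then y turns the
  signed triple integral of f x y z = <x,y> <x,z> <y,z> into the integral of |A z|^2 d\<mu>(z).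
  For unit z, Cauchy-Schwarz gives |A z|^2 >= <z, A z>^2, and by Jensen the integral of
  <z, A z>^2 is at least (tr A^2)^2. Finally tr A^2 - 1/d = |A - I/d|^2 (Frobenius norm), so the
  signed integral is at least 1/d^2, with equality exactly when A = I/d.
  The absolute integral exceeds the signed one by the integral of the continuous nonnegative
  function |f| - f, which vanishes exactly when f >= 0 on the cube of the support of \<mu>.
*)

lemma AE_in_measure_support:
  fixes M :: "'a::second_countable_topology measure"
  assumes "sets M = sets borel"
  shows "AE x in M. x \<in> measure_support M"
proof -
  define \<F> where "\<F> = {U::'a set. open U \<and> emeasure M U = 0}"
  obtain \<F>' where \<F>': "\<F>' \<subseteq> \<F>" "countable \<F>'" "\<Union>\<F>' = \<Union>\<F>"
    using Lindelof[of \<F>] unfolding \<F>_def by blast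
  have "(\<Union>U\<in>\<F>'. U) \<in> null_sets M"
    using \<F>' assms by (intro null_sets_UN') (auto simp: \<F>_def null_sets_def)
  moreover have "{x \<in> space M. x \<notin> measure_support M} \<subseteq> (\<Union>U\<in>\<F>'. U)"
    using \<F>'(3) by (auto simp: measure_support_def \<F>_def not_less)
  ultimately show ?thesis by (rule AE_I')
qed

lemma AE_obtain_in_set:
  assumes "AE x in M. P x" and "A \<in> sets M" and "0 < emeasure M A"
  obtains x where "x \<in> A" and "P x"
proof -
  have "\<exists>x\<in>A. P x"
  proof (rule ccontr)
    assume "\<not> (\<exists>x\<in>A. P x)"
    with assms(1) have "AE x in M. x \<notin> A" by (auto elim: eventually_mono)
    then have "emeasure M {x \<in> space M. x \<in> A} = 0" by (rule emeasure_eq_0_AE)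
    moreover have "{x \<in> space M. x \<in> A} = A" using sets.sets_into_space[OF assms(2)] by blast
    ultimately show False using assms(3) by simp
  qed
  with that show thesis by blast
qed

lemma integral_nonneg_eq_0_obtain_zero:
  fixes h :: "'a \<Rightarrow> real"
  assumes "integrable M h" and "\<And>x. 0 \<le> h x" and "integral\<^sup>L M h = 0"
    and "A \<in> sets M" and "0 < emeasure M A"
  obtains x where "x \<in> A" and "h x = 0"
proof -
  have "AE x in M. h x = 0"
    using assms(1-3) by (subst (asm) integral_nonneg_eq_0_iff_AE) auto
  then show thesis using that by (rule AE_obtain_in_set[OF _ assms(4,5)])
qed

lemma continuous_on_pos_obtain_open_box:
  fixes g :: "'a::topological_space \<Rightarrow> 'b::topological_space \<Rightarrow> 'c::topological_space \<Rightarrow> real"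
  assumes "continuous_on UNIV (\<lambda>(x, y, z). g x y z)" and "0 < g x0 y0 z0"
  obtains U V W where "open U" "open V" "open W" "x0 \<in> U" "y0 \<in> V" "z0 \<in> W"
    and "\<And>x y z. x \<in> U \<Longrightarrow> y \<in> V \<Longrightarrow> z \<in> W \<Longrightarrow> 0 < g x y z"
proof -
  have "open {(x, y, z). 0 < g x y z}"
    using open_Collect_less[OF continuous_on_const assms(1)] by (simp add: case_prod_unfold)
  moreover have "(x0, y0, z0) \<in> {(x, y, z). 0 < g x y z}"
    using assms(2) by simp
  ultimately obtain U VW where "open U" "open VW" "(x0, y0, z0) \<in> U \<times> VW"
      "U \<times> VW \<subseteq> {(x, y, z). 0 < g x y z}"
    by (rule open_prod_elim)
  moreover from this obtain V W where "open V" "open W" "(y0, z0) \<in> V \<times> W" "V \<times> W \<subseteq> VW"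
    by (metis mem_Sigma_iff open_prod_elim)
  ultimately show thesis
    by (intro that[of U V W]) auto
qed

lemma nonneg_triple_integral_eq_0_iff_support:
  fixes M :: "'a::second_countable_topology measure" and g :: "'a \<Rightarrow> 'a \<Rightarrow> 'a \<Rightarrow> real"
  assumes sets_M: "sets M = sets borel"
    and cont: "continuous_on UNIV (\<lambda>(x, y, z). g x y z)"
    and nonneg: "\<And>x y z. 0 \<le> g x y z"
    and int1: "\<And>y z. integrable M (\<lambda>x. g x y z)"
    and int2: "\<And>z. integrable M (\<lambda>y. \<integral>x. g x y z \<partial>M)"
    and int3: "integrable M (\<lambda>z. \<integral>y. \<integral>x. g x y z \<partial>M \<partial>M)"
  shows "(\<integral>z. \<integral>y. \<integral>x. g x y z \<partial>M \<partial>M \<partial>M) = 0 \<longleftrightarrow>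
    (\<forall>x\<in>measure_support M. \<forall>y\<in>measure_support M. \<forall>z\<in>measure_support M. g x y z = 0)"
proof
  assume zero: "\<forall>x\<in>measure_support M. \<forall>y\<in>measure_support M. \<forall>z\<in>measure_support M. g x y z = 0"
  note supp = AE_in_measure_support[OF sets_M]
  show "(\<integral>z. \<integral>y. \<integral>x. g x y z \<partial>M \<partial>M \<partial>M) = 0"
    by (intro integral_eq_zero_AE eventually_mono[OF supp] impI) (use zero in blast)
next
  assume integral_0: "(\<integral>z. \<integral>y. \<integral>x. g x y z \<partial>M \<partial>M \<partial>M) = 0"
  show "\<forall>x\<in>measure_support M. \<forall>y\<in>measure_support M. \<forall>z\<in>measure_support M. g x y z = 0"
  proof (rule ccontr)
    assume "\<not> ?thesis"
    then obtain x0 y0 z0 where supp: "x0 \<in> measure_support M" "y0 \<in> measure_support M"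
        "z0 \<in> measure_support M" and g_pos: "0 < g x0 y0 z0"
      using nonneg by (force simp: less_le)
    obtain U V W where "open U" "open V" "open W" "x0 \<in> U" "y0 \<in> V" "z0 \<in> W"
      and pos: "\<And>x y z. x \<in> U \<Longrightarrow> y \<in> V \<Longrightarrow> z \<in> W \<Longrightarrow> 0 < g x y z"
      by (rule continuous_on_pos_obtain_open_box[OF cont g_pos]) blast
    have sets: "U \<in> sets M" "V \<in> sets M" "W \<in> sets M"
      using \<open>open U\<close> \<open>open V\<close> \<open>open W\<close> by (simp_all add: sets_M)
    have pos_measure: "0 < emeasure M U" "0 < emeasure M V" "0 < emeasure M W"
      using supp \<open>x0 \<in> U\<close> \<open>y0 \<in> V\<close> \<open>z0 \<in> W\<close> \<open>open U\<close> \<open>open V\<close> \<open>open W\<close>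
      unfolding measure_support_def by blast+
    obtain z where "z \<in> W" and z: "(\<integral>y. \<integral>x. g x y z \<partial>M \<partial>M) = 0"
      by (rule integral_nonneg_eq_0_obtain_zero[OF int3 _ integral_0 sets(3) pos_measure(3)])
        (auto intro!: Bochner_Integration.integral_nonneg nonneg)
    obtain y where "y \<in> V" and y: "(\<integral>x. g x y z \<partial>M) = 0"
      by (rule integral_nonneg_eq_0_obtain_zero[OF int2 _ z sets(2) pos_measure(2)])
        (auto intro!: Bochner_Integration.integral_nonneg nonneg)
    obtain x where "x \<in> U" and "g x y z = 0"
      by (rule integral_nonneg_eq_0_obtain_zero[OF int1 nonneg y sets(1) pos_measure(1)])
    with pos[of x y z] \<open>y \<in> V\<close> \<open>z \<in> W\<close> show False by simp
  qed
qed

lemma borel_measurable_continuous_compose3: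
  fixes g :: "'a::second_countable_topology \<Rightarrow> 'b::second_countable_topology \<Rightarrow>
    'c::second_countable_topology \<Rightarrow> 'd::topological_space"
  assumes "continuous_on UNIV (\<lambda>(x, y, z). g x y z)"
    and [measurable]: "fx \<in> M \<rightarrow>\<^sub>M borel" "fy \<in> M \<rightarrow>\<^sub>M borel" "fz \<in> M \<rightarrow>\<^sub>M borel"
  shows "(\<lambda>w. g (fx w) (fy w) (fz w)) \<in> borel_measurable M"
proof -
  have "(\<lambda>w. (fx w, fy w, fz w)) \<in> M \<rightarrow>\<^sub>M borel \<Otimes>\<^sub>M borel \<Otimes>\<^sub>M borel"
    by measurable
  moreover have "(\<lambda>(x, y, z). g x y z) \<in> borel_measurable (borel \<Otimes>\<^sub>M borel \<Otimes>\<^sub>M borel)"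
    using borel_measurable_continuous_onI[OF assms(1)] by (simp add: borel_prod)
  ultimately have "(\<lambda>w. (\<lambda>(x, y, z). g x y z) (fx w, fy w, fz w)) \<in> borel_measurable M"
    by (rule measurable_compose)
  then show ?thesis by simp
qed

lemma sum_sum_square_sub_diagonal:
  fixes b :: "'i \<Rightarrow> 'i \<Rightarrow> real"
  assumes "finite I"
  shows "(\<Sum>i\<in>I. \<Sum>j\<in>I. (b i j - (if i = j then c else 0))\<^sup>2)
    = (\<Sum>i\<in>I. \<Sum>j\<in>I. (b i j)\<^sup>2) - 2 * c * (\<Sum>i\<in>I. b i i) + real (card I) * c\<^sup>2"
proof -
  have "(b i j - (if i = j then c else 0))\<^sup>2 = (b i j)\<^sup>2 - (if j = i then 2 * c * b i i - c\<^sup>2 else 0)"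
    for i j
    by (simp add: power2_diff)
  then show ?thesis
    using assms by (simp add: sum_subtractf sum_distrib_left)
qed

locale sphere_prob_space = prob_space \<mu> for \<mu> :: "'a::euclidean_space measure" +
  assumes sets_eq_borel [measurable_cong]: "sets \<mu> = sets borel"
    and emeasure_sphere: "emeasure \<mu> (sphere 0 1) = 1"
begin

lemma AE_norm_eq_1: "AE x in \<mu>. norm x = 1"
proof -
  have "prob (sphere 0 1) = 1" using emeasure_sphere by (simp add: emeasure_eq_measure)
  from AE_prob_1[OF this] show ?thesis by simp
qed

lemma integrable_bounded_on_sphere:
  fixes g :: "'a \<Rightarrow> real"
  assumes "g \<in> borel_measurable \<mu>" and "\<And>x. norm x = 1 \<Longrightarrow> \<bar>g x\<bar> \<le> C"
  shows "integrable \<mu> g"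
  using AE_norm_eq_1
  by (intro integrable_const_bound[where B = C] assms(1)) (auto elim: eventually_mono intro: assms(2))

lemma abs_integral_bounded_on_sphere:
  fixes g :: "'a \<Rightarrow> real"
  assumes "\<And>x. norm x = 1 \<Longrightarrow> \<bar>g x\<bar> \<le> C"
  shows "\<bar>integral\<^sup>L \<mu> g\<bar> \<le> C"
proof (cases "integrable \<mu> g")
  case True
  have "\<bar>integral\<^sup>L \<mu> g\<bar> \<le> (\<integral>x. \<bar>g x\<bar> \<partial>\<mu>)"
    using integral_norm_bound[of \<mu> g] by simp
  also have "\<dots> \<le> (\<integral>x. C \<partial>\<mu>)"
    using True AE_norm_eq_1 by (intro integral_mono_AE) (auto elim!: eventually_mono intro: assms)
  finally show ?thesis by (simp add: prob_space)
next
  case False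
  obtain x :: 'a where "norm x = 1"
    using vector_choose_size[of 1] by auto
  then have "0 \<le> C" using assms[of x] by linarith
  with False show ?thesis by (simp add: not_integrable_integral_eq)
qed

lemma integrable_nested_integrals:
  fixes g :: "'a \<Rightarrow> 'a \<Rightarrow> 'a \<Rightarrow> real"
  assumes cont: "continuous_on UNIV (\<lambda>(x, y, z). g x y z)"
  shows "integrable \<mu> (\<lambda>x. g x y z)"
    and "integrable \<mu> (\<lambda>y. \<integral>x. g x y z \<partial>\<mu>)"
    and "integrable \<mu> (\<lambda>z. \<integral>y. \<integral>x. g x y z \<partial>\<mu> \<partial>\<mu>)"
proof -
  note [measurable (raw)] = borel_measurable_continuous_compose3[OF cont]
  have bound: "\<exists>C. \<forall>x\<in>S. \<forall>y\<in>T. \<forall>z\<in>U. \<bar>g x y z\<bar> \<le> C"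
    if "compact S" "compact T" "compact U" for S T U
    using continuous_on_compact_bound[OF compact_Times[OF that(1) compact_Times[OF that(2,3)]]
        continuous_on_subset[OF cont subset_UNIV]]
    by (metis (no_types, lifting) mem_Sigma_iff real_norm_def case_prod_conv)
  from bound[of "sphere 0 1" "{y}" "{z}"] obtain C1 where C1: "\<forall>x\<in>sphere 0 1. \<bar>g x y z\<bar> \<le> C1"
    by auto
  show "integrable \<mu> (\<lambda>x. g x y z)"
    by (intro integrable_bounded_on_sphere[where C = C1]) (measurable, use C1 in simp)
  from bound[of "sphere 0 1" "sphere 0 1" "{z}"]
  obtain C2 where C2: "\<forall>x\<in>sphere 0 1. \<forall>y\<in>sphere 0 1. \<bar>g x y z\<bar> \<le> C2"
    by auto
  show "integrable \<mu> (\<lambda>y. \<integral>x. g x y z \<partial>\<mu>)"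
    by (intro integrable_bounded_on_sphere[where C = C2] abs_integral_bounded_on_sphere)
      (measurable, use C2 in simp)
  from bound[of "sphere 0 1" "sphere 0 1" "sphere 0 1"]
  obtain C3 where C3: "\<forall>x\<in>sphere 0 1. \<forall>y\<in>sphere 0 1. \<forall>z\<in>sphere 0 1. \<bar>g x y z\<bar> \<le> C3"
    by auto
  show "integrable \<mu> (\<lambda>z. \<integral>y. \<integral>x. g x y z \<partial>\<mu> \<partial>\<mu>)"
    by (intro integrable_bounded_on_sphere[where C = C3] abs_integral_bounded_on_sphere)
      (measurable, use C3 in simp)
qed

lemma triple_integral_diff:
  fixes g h :: "'a \<Rightarrow> 'a \<Rightarrow> 'a \<Rightarrow> real"
  assumes g: "continuous_on UNIV (\<lambda>(x, y, z). g x y z)"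
    and h: "continuous_on UNIV (\<lambda>(x, y, z). h x y z)"
  shows "(\<integral>z. \<integral>y. \<integral>x. g x y z - h x y z \<partial>\<mu> \<partial>\<mu> \<partial>\<mu>)
    = (\<integral>z. \<integral>y. \<integral>x. g x y z \<partial>\<mu> \<partial>\<mu> \<partial>\<mu>) - (\<integral>z. \<integral>y. \<integral>x. h x y z \<partial>\<mu> \<partial>\<mu> \<partial>\<mu>)"
  using integrable_nested_integrals[OF g] integrable_nested_integrals[OF h] by simp

definition second_moment :: "'a \<Rightarrow> 'a \<Rightarrow> real" where
  "second_moment u w = (\<integral>x. (x \<bullet> u) * (x \<bullet> w) \<partial>\<mu>)"

lemma integrable_inner_mult_inner: "integrable \<mu> (\<lambda>x. (x \<bullet> u) * (x \<bullet> w))"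
  by (rule integrable_nested_integrals(1)[where g = "\<lambda>x _ _. (x \<bullet> u) * (x \<bullet> w)"])
    (unfold case_prod_unfold, intro continuous_intros)

lemma abs_second_moment_le: "\<bar>second_moment u w\<bar> \<le> norm u * norm w"
  unfolding second_moment_def
proof (rule abs_integral_bounded_on_sphere)
  fix x :: 'a
  assume "norm x = 1"
  then show "\<bar>(x \<bullet> u) * (x \<bullet> w)\<bar> \<le> norm u * norm w"
    using Cauchy_Schwarz_ineq2[of x u] Cauchy_Schwarz_ineq2[of x w]
    by (simp add: abs_mult mult_mono)
qed

lemma second_moment_commute: "second_moment u w = second_moment w u"
  unfolding second_moment_def by (simp add: mult.commute)

lemma second_moment_expand_left: "second_moment u w = (\<Sum>i\<in>Basis. (u \<bullet> i) * second_moment i w)"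
proof -
  have "(x \<bullet> u) * (x \<bullet> w) = (\<Sum>i\<in>Basis. (u \<bullet> i) * ((x \<bullet> i) * (x \<bullet> w)))" for x :: 'a
    by (subst euclidean_inner[of x u]) (simp add: sum_distrib_left mult_ac)
  then show ?thesis
    by (simp add: second_moment_def integrable_inner_mult_inner)
qed

lemma second_moment_expand_right: "second_moment u w = (\<Sum>j\<in>Basis. (w \<bullet> j) * second_moment u j)"
  using second_moment_expand_left[of w u] by (simp add: second_moment_commute)

lemma borel_measurable_second_moment [measurable (raw)]:
  assumes [measurable]: "f \<in> M \<rightarrow>\<^sub>M borel" "g \<in> M \<rightarrow>\<^sub>M borel"
  shows "(\<lambda>x. second_moment (f x) (g x)) \<in> borel_measurable M"
proof -
  have expand: "second_moment u w
      = (\<Sum>i\<in>Basis. \<Sum>j\<in>Basis. (u \<bullet> i) * (w \<bullet> j) * second_moment i j)" for u w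
    by (subst second_moment_expand_left, subst second_moment_expand_right)
      (simp add: sum_distrib_left mult_ac)
  have "(\<lambda>x. second_moment (f x) (g x))
      = (\<lambda>x. \<Sum>i\<in>Basis. \<Sum>j\<in>Basis. (f x \<bullet> i) * (g x \<bullet> j) * second_moment i j)"
    by (intro ext expand)
  also have "\<dots> \<in> borel_measurable M"
    by measurable
  finally show ?thesis .
qed

lemma trace_second_moment: "(\<Sum>i\<in>Basis. second_moment i i) = 1"
proof -
  have "(\<Sum>i\<in>Basis. second_moment i i) = (\<integral>x. (\<Sum>i\<in>Basis. (x \<bullet> i) * (x \<bullet> i)) \<partial>\<mu>)"
    by (simp add: second_moment_def integrable_inner_mult_inner)
  also have "\<dots> = (\<integral>x. 1 \<partial>\<mu>)"
    using AE_norm_eq_1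
    by (intro integral_cong_AE) (auto elim!: eventually_mono simp: euclidean_inner[symmetric] norm_eq_1)
  finally show ?thesis by (simp add: prob_space)
qed

lemma isotropic_iff_second_moment:
  "isotropic \<mu> \<longleftrightarrow>
    (\<forall>i\<in>Basis. \<forall>j\<in>Basis. second_moment i j = (if i = j then 1 / real DIM('a) else 0))"
  unfolding isotropic_def second_moment_def ..

lemma sum_square_second_moment_sub_identity:
  "(\<Sum>i\<in>Basis. \<Sum>j\<in>Basis. (second_moment i j - (if i = j then 1 / real DIM('a) else 0))\<^sup>2)
    = (\<Sum>i\<in>Basis. \<Sum>j\<in>Basis. (second_moment i j)\<^sup>2) - 1 / real DIM('a)"
  using sum_sum_square_sub_diagonal[of Basis second_moment "1 / real DIM('a)"]
  by (simp add: trace_second_moment power2_eq_square)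

lemma sum_square_second_moment_ge: "1 / real DIM('a) \<le> (\<Sum>i\<in>Basis. \<Sum>j\<in>Basis. (second_moment i j)\<^sup>2)"
  using sum_square_second_moment_sub_identity
    sum_nonneg[of Basis "\<lambda>i. \<Sum>j\<in>Basis. (second_moment i j - (if i = j then 1 / real DIM('a) else 0))\<^sup>2"]
  by (simp add: sum_nonneg)

lemma sum_square_second_moment_eq_iff:
  "(\<Sum>i\<in>Basis. \<Sum>j\<in>Basis. (second_moment i j)\<^sup>2) = 1 / real DIM('a) \<longleftrightarrow> isotropic \<mu>"
proof -
  have "(\<Sum>i\<in>Basis. \<Sum>j\<in>Basis. (second_moment i j)\<^sup>2) = 1 / real DIM('a) \<longleftrightarrow>
      (\<Sum>i\<in>Basis. \<Sum>j\<in>Basis. (second_moment i j - (if i = j then 1 / real DIM('a) else 0))\<^sup>2) = 0"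
    unfolding sum_square_second_moment_sub_identity by linarith
  also have "\<dots> \<longleftrightarrow> isotropic \<mu>"
    by (simp add: sum_nonneg_eq_0_iff sum_nonneg isotropic_iff_second_moment)
  finally show ?thesis .
qed

lemma integral_second_moment_diag: "(\<integral>z. second_moment z z \<partial>\<mu>) = (\<Sum>i\<in>Basis. \<Sum>j\<in>Basis. (second_moment i j)\<^sup>2)"
proof -
  have "second_moment z z = (\<Sum>i\<in>Basis. \<Sum>j\<in>Basis. second_moment i j * ((z \<bullet> i) * (z \<bullet> j)))" for z
    by (subst second_moment_expand_left, subst second_moment_expand_right) (simp add: sum_distrib_left mult_ac)
  then show ?thesis
    by (simp add: integrable_inner_mult_inner power2_eq_square flip: second_moment_def)
qed

lemma square_second_moment_diag_le:
  assumes "norm z = 1"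
  shows "(second_moment z z)\<^sup>2 \<le> (\<Sum>i\<in>Basis. (second_moment i z)\<^sup>2)"
proof -
  have "(second_moment z z)\<^sup>2 \<le> (\<Sum>i\<in>Basis. (z \<bullet> i)\<^sup>2) * (\<Sum>i\<in>Basis. (second_moment i z)\<^sup>2)"
    unfolding second_moment_expand_left[of z z] by (rule Cauchy_Schwarz_ineq_sum)
  also have "(\<Sum>i\<in>Basis. (z \<bullet> i)\<^sup>2) = 1"
    using assms by (simp add: power2_eq_square euclidean_inner[symmetric] norm_eq_1)
  finally show ?thesis by simp
qed

lemma integral_second_moment_mult_inner:
  "(\<integral>y. second_moment y z * (y \<bullet> z) \<partial>\<mu>) = (\<Sum>i\<in>Basis. (second_moment i z)\<^sup>2)"
proof -
  have "second_moment y z * (y \<bullet> z) = (\<Sum>i\<in>Basis. second_moment i z * ((y \<bullet> i) * (y \<bullet> z)))" for y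
    by (subst second_moment_expand_left) (simp add: sum_distrib_left mult_ac)
  then show ?thesis
    by (simp add: integrable_inner_mult_inner power2_eq_square flip: second_moment_def)
qed

lemma triple_integral_eq_integral_sum_square:
  "(\<integral>z. \<integral>y. \<integral>x. (x \<bullet> y) * (x \<bullet> z) * (y \<bullet> z) \<partial>\<mu> \<partial>\<mu> \<partial>\<mu>)
    = (\<integral>z. (\<Sum>i\<in>Basis. (second_moment i z)\<^sup>2) \<partial>\<mu>)"
  by (simp add: second_moment_def integral_second_moment_mult_inner[unfolded second_moment_def])

lemma integrable_sum_square_second_moment: "integrable \<mu> (\<lambda>z. \<Sum>i\<in>Basis. (second_moment i z)\<^sup>2)"
proof -
  have "integrable \<mu> (\<lambda>z. \<integral>y. \<integral>x. (x \<bullet> y) * (x \<bullet> z) * (y \<bullet> z) \<partial>\<mu> \<partial>\<mu>)"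
    by (rule integrable_nested_integrals) (unfold case_prod_unfold, intro continuous_intros)
  then show ?thesis
    by (simp add: second_moment_def integral_second_moment_mult_inner[unfolded second_moment_def])
qed

lemma square_sum_square_second_moment_le:
  "(\<Sum>i\<in>Basis. \<Sum>j\<in>Basis. (second_moment i j)\<^sup>2)\<^sup>2 \<le> (\<integral>z. (\<Sum>i\<in>Basis. (second_moment i z)\<^sup>2) \<partial>\<mu>)"
proof -
  have bound: "\<bar>second_moment z z\<bar> \<le> 1" if "norm z = 1" for z :: 'a
    using abs_second_moment_le[of z z] that by simp
  have int: "integrable \<mu> (\<lambda>z. second_moment z z)" "integrable \<mu> (\<lambda>z. (second_moment z z)\<^sup>2)"
    using bound by (auto intro!: integrable_bounded_on_sphere[where C = 1] simp: abs_square_le_1)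
  have "(\<Sum>i\<in>Basis. \<Sum>j\<in>Basis. (second_moment i j)\<^sup>2)\<^sup>2 = (\<integral>z. second_moment z z \<partial>\<mu>)\<^sup>2"
    by (simp add: integral_second_moment_diag)
  also have "\<dots> \<le> (\<integral>z. (second_moment z z)\<^sup>2 \<partial>\<mu>)"
    using variance_positive[of "\<lambda>z. second_moment z z"] variance_eq[OF int] by simp
  also have "\<dots> \<le> (\<integral>z. (\<Sum>i\<in>Basis. (second_moment i z)\<^sup>2) \<partial>\<mu>)"
    using AE_norm_eq_1 int(2) integrable_sum_square_second_moment
    by (intro integral_mono_AE) (auto elim!: eventually_mono intro: square_second_moment_diag_le)
  finally show ?thesis .
qed

lemma integral_sum_square_second_moment_ge:
  "1 / (real DIM('a))\<^sup>2 \<le> (\<integral>z. (\<Sum>i\<in>Basis. (second_moment i z)\<^sup>2) \<partial>\<mu>)"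
proof -
  have "(1 / real DIM('a))\<^sup>2 \<le> (\<Sum>i\<in>Basis. \<Sum>j\<in>Basis. (second_moment i j)\<^sup>2)\<^sup>2"
    using sum_square_second_moment_ge by (intro power_mono) auto
  with square_sum_square_second_moment_le show ?thesis
    by (simp add: power_divide)
qed

lemma second_moment_isotropic:
  assumes "isotropic \<mu>" and "i \<in> Basis"
  shows "second_moment i z = (z \<bullet> i) / real DIM('a)"
proof -
  have "second_moment i z = (\<Sum>j\<in>Basis. (z \<bullet> j) * (if i = j then 1 / real DIM('a) else 0))"
    using assms by (subst second_moment_expand_right) (simp add: isotropic_iff_second_moment)
  also have "\<dots> = (\<Sum>j\<in>Basis. if j = i then (z \<bullet> i) / real DIM('a) else 0)"
    by (rule sum.cong) auto
  also have "\<dots> = (z \<bullet> i) / real DIM('a)"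
    using assms(2) by simp
  finally show ?thesis .
qed

lemma integral_sum_square_second_moment_eq_iff:
  "(\<integral>z. (\<Sum>i\<in>Basis. (second_moment i z)\<^sup>2) \<partial>\<mu>) = 1 / (real DIM('a))\<^sup>2 \<longleftrightarrow> isotropic \<mu>"
proof
  assume eq: "(\<integral>z. (\<Sum>i\<in>Basis. (second_moment i z)\<^sup>2) \<partial>\<mu>) = 1 / (real DIM('a))\<^sup>2"
  have "(\<Sum>i\<in>Basis. \<Sum>j\<in>Basis. (second_moment i j)\<^sup>2)\<^sup>2 \<le> (1 / real DIM('a))\<^sup>2"
    using square_sum_square_second_moment_le by (simp add: eq power_divide)
  then have "(\<Sum>i\<in>Basis. \<Sum>j\<in>Basis. (second_moment i j)\<^sup>2) \<le> 1 / real DIM('a)"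
    by (rule power2_le_imp_le) simp
  with sum_square_second_moment_ge show "isotropic \<mu>"
    using sum_square_second_moment_eq_iff by linarith
next
  assume iso: "isotropic \<mu>"
  have "(\<Sum>i\<in>Basis. (second_moment i z)\<^sup>2) = 1 / (real DIM('a))\<^sup>2" if "norm z = 1" for z :: 'a
  proof -
    have "(\<Sum>i\<in>Basis. (second_moment i z)\<^sup>2) = (\<Sum>i\<in>Basis. (z \<bullet> i) * (z \<bullet> i)) / (real DIM('a))\<^sup>2"
      by (simp add: second_moment_isotropic[OF iso] power_divide power2_eq_square sum_divide_distrib)
    also have "\<dots> = 1 / (real DIM('a))\<^sup>2"
      using that by (simp add: euclidean_inner[symmetric] norm_eq_1)
    finally show ?thesis .
  qed
  then have "(\<integral>z. (\<Sum>i\<in>Basis. (second_moment i z)\<^sup>2) \<partial>\<mu>) = (\<integral>z. 1 / (real DIM('a))\<^sup>2 \<partial>\<mu>)"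
    using AE_norm_eq_1 by (intro integral_cong_AE) (auto elim!: eventually_mono)
  then show "(\<integral>z. (\<Sum>i\<in>Basis. (second_moment i z)\<^sup>2) \<partial>\<mu>) = 1 / (real DIM('a))\<^sup>2"
    by (simp add: prob_space)
qed

lemma triple_integral_abs_sub_eq_0_iff:
  "(\<integral>z. \<integral>y. \<integral>x. \<bar>(x \<bullet> y) * (x \<bullet> z) * (y \<bullet> z)\<bar> - (x \<bullet> y) * (x \<bullet> z) * (y \<bullet> z) \<partial>\<mu> \<partial>\<mu> \<partial>\<mu>) = 0
    \<longleftrightarrow> (\<forall>x\<in>measure_support \<mu>. \<forall>y\<in>measure_support \<mu>. \<forall>z\<in>measure_support \<mu>.
          0 \<le> (x \<bullet> y) * (x \<bullet> z) * (y \<bullet> z))"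
proof -
  have cont: "continuous_on UNIV
      (\<lambda>(x, y, z). \<bar>(x \<bullet> y) * (x \<bullet> z) * (y \<bullet> z)\<bar> - (x \<bullet> y) * (x \<bullet> z) * (y \<bullet> z) :: real)"
    unfolding case_prod_unfold by (intro continuous_intros)
  have abs_sub_eq_0: "\<bar>a\<bar> - a = 0 \<longleftrightarrow> 0 \<le> a" for a :: real
    by (cases "0 \<le> a") auto
  show ?thesis
    using nonneg_triple_integral_eq_0_iff_support[OF sets_eq_borel cont _ integrable_nested_integrals[OF cont]]
    unfolding abs_sub_eq_0 by simp
qed

end

theorem corollary4p3:
  fixes \<mu> :: "'a::euclidean_space measure"
  assumes "prob_space \<mu>"
    and "sets \<mu> = sets borel"
    and "emeasure \<mu> (sphere 0 1) = 1"
  shows "(\<integral>z. \<integral>y. \<integral>x. \<bar>(x \<bullet> y) * (x \<bullet> z) * (y \<bullet> z)\<bar> \<partial>\<mu> \<partial>\<mu> \<partial>\<mu>)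
           \<ge> 1 / (real DIM('a))\<^sup>2
       \<and> ((\<integral>z. \<integral>y. \<integral>x. \<bar>(x \<bullet> y) * (x \<bullet> z) * (y \<bullet> z)\<bar> \<partial>\<mu> \<partial>\<mu> \<partial>\<mu>)
             = 1 / (real DIM('a))\<^sup>2
          \<longleftrightarrow> isotropic \<mu> \<and>
              (\<forall>x\<in>measure_support \<mu>. \<forall>y\<in>measure_support \<mu>. \<forall>z\<in>measure_support \<mu>.
                 (x \<bullet> y) * (x \<bullet> z) * (y \<bullet> z) \<ge> 0))"
proof -
  interpret sphere_prob_space \<mu>
    using assms by (intro sphere_prob_space.intro sphere_prob_space_axioms.intro)
  define T where "T = (\<integral>z. (\<Sum>i\<in>Basis. (second_moment i z)\<^sup>2) \<partial>\<mu>)"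
  define D where "D = (\<integral>z. \<integral>y. \<integral>x. \<bar>(x \<bullet> y) * (x \<bullet> z) * (y \<bullet> z)\<bar> - (x \<bullet> y) * (x \<bullet> z) * (y \<bullet> z) \<partial>\<mu> \<partial>\<mu> \<partial>\<mu>)"
  have "continuous_on UNIV (\<lambda>(x, y, z). \<bar>(x \<bullet> y) * (x \<bullet> z) * (y \<bullet> z)\<bar> :: real)"
    and "continuous_on UNIV (\<lambda>(x, y, z). (x \<bullet> y) * (x \<bullet> z) * (y \<bullet> z) :: real)"
    unfolding case_prod_unfold by (intro continuous_intros)+
  from triple_integral_diff[OF this]
  have "(\<integral>z. \<integral>y. \<integral>x. \<bar>(x \<bullet> y) * (x \<bullet> z) * (y \<bullet> z)\<bar> \<partial>\<mu> \<partial>\<mu> \<partial>\<mu>) = T + D"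
    unfolding T_def D_def triple_integral_eq_integral_sum_square by simp
  moreover have "0 \<le> D"
    unfolding D_def by (intro Bochner_Integration.integral_nonneg) simp
  moreover note integral_sum_square_second_moment_ge integral_sum_square_second_moment_eq_iff
    triple_integral_abs_sub_eq_0_iff
  ultimately show ?thesis
    unfolding T_def[symmetric] D_def[symmetric] by auto
qed

end
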